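(* Let $H$ be a standard finitary set functor with presentation $\varepsilon\colon H_\Sigma\to H$, let $Y$ be a set, and assume that the free corecursive $H$-algebra $(CY,\psi_Y)$ on $Y$ is a cia for $H$. Let $e\colon X\to H_\Sigma X+Y$ be any map, let $e^{\ddagger}\colon X\to T_\Sigma Y$ be the unique map with $e^{\ddagger}=[\tau^\Sigma_Y,\eta^\Sigma_Y]\cdot(H_\Sigma e^{\ddagger}+Y)\cdot e$, put $\bar e=(\varepsilon_X+\eta^C_Y)\cdot e\colon X\to HX+CY$, and let $\bar e^\dagger\colon X\to CY$ be its unique solution in the cia $CY$. Then $$m_Y\cdot\bar e^\dagger=\hat\varepsilon_Y\cdot e^{\ddagger}\colon X\to TY.$$
   Context: Finitary set functor: $HX=\bigcup HY$ over finite $Y\subseteq X$; standard: preserves inclusions and finite intersections. $H_\Sigma X=\coprod_n\Sigma_n\times X^n$; a presentation is a natural transformation $\varepsilon\colon H_\Sigma\to H$ with surjective components. An algebra $a\colon GA\to A$ for an endofunctor $G$ is corecursive if every coalgebra $c\colon Z\to GZ$ admits a unique $s$ with $s=a\cdot Gs\cdot c$; it is a cia if every $f\colon Z\to GZ+A$ admits a unique solution $s$ with $s=[a,\mathrm{id}_A]\cdot(Gs+\mathrm{id}_A)\cdot f$. $T_\Sigma Y$ is the set of all (possibly infinite) $\Sigma$-trees over $Y$ (leaves labeled by constants or elements of $Y$), with tree-tupling structure $\tau^\Sigma_Y\colon H_\Sigma T_\Sigma Y\to T_\Sigma Y$ and $\eta^\Sigma_Y\colon Y\to T_\Sigma Y$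 the singleton trees; it is the free cia for $H_\Sigma$ on $Y$. $(TY,\tau_Y)$ with $\eta_Y\colon Y\to TY$ is the free cia for $H$ on $Y$ (the terminal coalgebra of $H(-)+Y$). $(CY,\psi_Y)$ with $\eta^C_Y\colon Y\to CY$ is the free corecursive $H$-algebra on $Y$, and $m_Y\colon CY\to TY$ is the unique $H$-algebra morphism with $m_Y\cdot\eta^C_Y=\eta_Y$. $\hat\varepsilon_Y\colon T_\Sigma Y\to TY$ is the unique $H_\Sigma$-algebra morphism from $(T_\Sigma Y,\tau^\Sigma_Y)$ to $(TY,\tau_Y\cdot\varepsilon_{TY})$ with $\hat\varepsilon_Y\cdot\eta^\Sigma_Y=\eta_Y$ (it is surjective, the canonical quotient). *)

theory Defs
  imports Main "HOL-Library.FuncSet"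
begin

(* Set functors are modelled on the subsets of a universe type 'u:
   Hob X is the object H X (a set of elements of type 'h), and
   Hmap f acts on H X for any map f defined on X. *)

definition set_functor :: "('u set \<Rightarrow> 'h set) \<Rightarrow> (('u \<Rightarrow> 'u) \<Rightarrow> 'h \<Rightarrow> 'h) \<Rightarrow> bool" where
  "set_functor Hob Hmap \<longleftrightarrow>
     (\<forall>X Y f. f \<in> X \<rightarrow> Y \<longrightarrow> Hmap f \<in> Hob X \<rightarrow> Hob Y) \<and>
     (\<forall>X f g. (\<forall>x\<in>X. f x = g x) \<longrightarrow> (\<forall>h\<in>Hob X. Hmap f h = Hmap g h)) \<and>
     (\<forall>X. \<forall>h\<in>Hob X. Hmap id h = h) \<and>
     (\<forall>X Y f g. f \<in> X \<rightarrow> Y \<longrightarrow> (\<forall>h\<in>Hob X. Hmap (g \<circ> f) h = Hmap g (Hmap f h)))"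

text \<open>Standard: preserves inclusions (the inclusion map is sent to the inclusion, since
  Hmap id is the identity) and finite intersections.\<close>
definition standard_functor :: "('u set \<Rightarrow> 'h set) \<Rightarrow> (('u \<Rightarrow> 'u) \<Rightarrow> 'h \<Rightarrow> 'h) \<Rightarrow> bool" where
  "standard_functor Hob Hmap \<longleftrightarrow> set_functor Hob Hmap \<and>
     (\<forall>X Y. X \<subseteq> Y \<longrightarrow> Hob X \<subseteq> Hob Y) \<and>
     (\<forall>X Y. Hob (X \<inter> Y) = Hob X \<inter> Hob Y)"

definition finitary :: "('u set \<Rightarrow> 'h set) \<Rightarrow> bool" where
  "finitary Hob \<longleftrightarrow> (\<forall>X. Hob X = (\<Union>Z\<in>{Z. Z \<subseteq> X \<and> finite Z}. Hob Z))"

definition HS :: "'s set \<Rightarrow> ('s \<Rightarrow> nat) \<Rightarrow> 'a set \<Rightarrow> ('s \<times> 'a list) set" where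
  "HS Sig ar X = {(\<sigma>, xs). \<sigma> \<in> Sig \<and> length xs = ar \<sigma> \<and> set xs \<subseteq> X}"

definition HSmap :: "('a \<Rightarrow> 'b) \<Rightarrow> 's \<times> 'a list \<Rightarrow> 's \<times> 'b list" where
  "HSmap f p = (fst p, map f (snd p))"

definition presentation ::
  "'s set \<Rightarrow> ('s \<Rightarrow> nat) \<Rightarrow> ('u set \<Rightarrow> 'h set) \<Rightarrow> (('u \<Rightarrow> 'u) \<Rightarrow> 'h \<Rightarrow> 'h)
   \<Rightarrow> ('u set \<Rightarrow> 's \<times> 'u list \<Rightarrow> 'h) \<Rightarrow> bool" where
  "presentation Sig ar Hob Hmap eps \<longleftrightarrow>
     (\<forall>X. eps X \<in> HS Sig ar X \<rightarrow> Hob X \<and> eps X ` HS Sig ar X = Hob X) \<and>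
     (\<forall>X Y f. f \<in> X \<rightarrow> Y \<longrightarrow>
        (\<forall>p\<in>HS Sig ar X. Hmap f (eps X p) = eps Y (HSmap f p)))"

codatatype ('s, 'y) stree = Leaf 'y | Node 's "('s, 'y) stree list"

coinductive_set TS :: "'s set \<Rightarrow> ('s \<Rightarrow> nat) \<Rightarrow> 'y set \<Rightarrow> ('s, 'y) stree set"
  for Sig ar Y where
  leaf: "y \<in> Y \<Longrightarrow> Leaf y \<in> TS Sig ar Y"
| node: "\<sigma> \<in> Sig \<Longrightarrow> length ts = ar \<sigma> \<Longrightarrow> (\<forall>t\<in>set ts. t \<in> TS Sig ar Y) \<Longrightarrow> Node \<sigma> ts \<in> TS Sig ar Y"

definition tauS :: "'s \<times> ('s, 'y) stree list \<Rightarrow> ('s, 'y) stree" where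
  "tauS p = Node (fst p) (snd p)"

definition H_alg :: "('u set \<Rightarrow> 'h set) \<Rightarrow> 'u set \<Rightarrow> ('h \<Rightarrow> 'u) \<Rightarrow> bool" where
  "H_alg Hob A a \<longleftrightarrow> a \<in> Hob A \<rightarrow> A"

definition alg_hom :: "('u set \<Rightarrow> 'h set) \<Rightarrow> (('u \<Rightarrow> 'u) \<Rightarrow> 'h \<Rightarrow> 'h)
   \<Rightarrow> 'u set \<Rightarrow> ('h \<Rightarrow> 'u) \<Rightarrow> 'u set \<Rightarrow> ('h \<Rightarrow> 'u) \<Rightarrow> ('u \<Rightarrow> 'u) \<Rightarrow> bool" where
  "alg_hom Hob Hmap A a B b h \<longleftrightarrow> h \<in> A \<rightarrow> B \<and> (\<forall>x\<in>Hob A. h (a x) = b (Hmap h x))"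

definition corecursive :: "('u set \<Rightarrow> 'h set) \<Rightarrow> (('u \<Rightarrow> 'u) \<Rightarrow> 'h \<Rightarrow> 'h)
   \<Rightarrow> 'u set \<Rightarrow> ('h \<Rightarrow> 'u) \<Rightarrow> bool" where
  "corecursive Hob Hmap A a \<longleftrightarrow> H_alg Hob A a \<and>
     (\<forall>Z c. c \<in> Z \<rightarrow> Hob Z \<longrightarrow>
        (\<exists>s\<in>Z \<rightarrow> A. (\<forall>z\<in>Z. s z = a (Hmap s (c z))) \<and>
           (\<forall>s'\<in>Z \<rightarrow> A. (\<forall>z\<in>Z. s' z = a (Hmap s' (c z))) \<longrightarrow> (\<forall>z\<in>Z. s' z = s z))))"

definition is_solution :: "('u set \<Rightarrow> 'h set) \<Rightarrow> (('u \<Rightarrow> 'u) \<Rightarrow> 'h \<Rightarrow> 'h)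
   \<Rightarrow> 'u set \<Rightarrow> 'u set \<Rightarrow> ('h \<Rightarrow> 'u) \<Rightarrow> ('u \<Rightarrow> 'h + 'u) \<Rightarrow> ('u \<Rightarrow> 'u) \<Rightarrow> bool" where
  "is_solution Hob Hmap Z A a f s \<longleftrightarrow> s \<in> Z \<rightarrow> A \<and>
     (\<forall>z\<in>Z. s z = (case f z of Inl h \<Rightarrow> a (Hmap s h) | Inr x \<Rightarrow> x))"

definition cia :: "('u set \<Rightarrow> 'h set) \<Rightarrow> (('u \<Rightarrow> 'u) \<Rightarrow> 'h \<Rightarrow> 'h)
   \<Rightarrow> 'u set \<Rightarrow> ('h \<Rightarrow> 'u) \<Rightarrow> bool" where
  "cia Hob Hmap A a \<longleftrightarrow> H_alg Hob A a \<and>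
     (\<forall>Z f. f \<in> Z \<rightarrow> Hob Z <+> A \<longrightarrow>
        (\<exists>s. is_solution Hob Hmap Z A a f s \<and>
           (\<forall>s'. is_solution Hob Hmap Z A a f s' \<longrightarrow> (\<forall>z\<in>Z. s' z = s z))))"

definition free_corecursive :: "('u set \<Rightarrow> 'h set) \<Rightarrow> (('u \<Rightarrow> 'u) \<Rightarrow> 'h \<Rightarrow> 'h)
   \<Rightarrow> 'y set \<Rightarrow> 'u set \<Rightarrow> ('h \<Rightarrow> 'u) \<Rightarrow> ('y \<Rightarrow> 'u) \<Rightarrow> bool" where
  "free_corecursive Hob Hmap Y C psi etaC \<longleftrightarrow>
     corecursive Hob Hmap C psi \<and> etaC \<in> Y \<rightarrow> C \<and>
     (\<forall>A a f. corecursive Hob Hmap A a \<and> f \<in> Y \<rightarrow> A \<longrightarrow>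
        (\<exists>h. alg_hom Hob Hmap C psi A a h \<and> (\<forall>y\<in>Y. h (etaC y) = f y) \<and>
           (\<forall>h'. alg_hom Hob Hmap C psi A a h' \<and> (\<forall>y\<in>Y. h' (etaC y) = f y)
                 \<longrightarrow> (\<forall>x\<in>C. h' x = h x))))"

definition free_cia :: "('u set \<Rightarrow> 'h set) \<Rightarrow> (('u \<Rightarrow> 'u) \<Rightarrow> 'h \<Rightarrow> 'h)
   \<Rightarrow> 'y set \<Rightarrow> 'u set \<Rightarrow> ('h \<Rightarrow> 'u) \<Rightarrow> ('y \<Rightarrow> 'u) \<Rightarrow> bool" where
  "free_cia Hob Hmap Y T tau eta \<longleftrightarrow>
     cia Hob Hmap T tau \<and> eta \<in> Y \<rightarrow> T \<and>
     (\<forall>A a f. cia Hob Hmap A a \<and> f \<in> Y \<rightarrow> A \<longrightarrow>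
        (\<exists>h. alg_hom Hob Hmap T tau A a h \<and> (\<forall>y\<in>Y. h (eta y) = f y) \<and>
           (\<forall>h'. alg_hom Hob Hmap T tau A a h' \<and> (\<forall>y\<in>Y. h' (eta y) = f y)
                 \<longrightarrow> (\<forall>x\<in>T. h' x = h x))))"

end

theory Submission
  imports Defs
begin

text \<open>Both sides of the claimed equation solve one and the same flat equation
  \<open>(\<epsilon>\<^sub>X + \<eta>\<^sub>Y) \<cdot> e\<close> in the cia \<open>TY\<close>: the left side because the algebra morphism
  \<open>m\<^sub>Y\<close> maps the solution \<open>e\<^sup>\<dagger>\<close> in \<open>CY\<close> to a solution in \<open>TY\<close>, the right side because
  \<open>\<epsilon>\<^sub>Y\<close> turns the tree-unfolding equation of \<open>e\<^sup>\<ddagger>\<close> into the solution equation via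
  naturality of \<open>\<epsilon>\<close>. Uniqueness of solutions in \<open>TY\<close> gives the result.\<close>

lemma set_functor_funcset:
  assumes "set_functor Hob Hmap" "f \<in> X \<rightarrow> Y"
  shows "Hmap f \<in> Hob X \<rightarrow> Hob Y"
  using assms(1)[unfolded set_functor_def, THEN conjunct1, rule_format, OF assms(2)] .

lemma set_functor_comp:
  assumes "set_functor Hob Hmap" "f \<in> X \<rightarrow> Y" "u \<in> Hob X"
  shows "Hmap (g \<circ> f) u = Hmap g (Hmap f u)"
  using assms(1)[unfolded set_functor_def, THEN conjunct2, THEN conjunct2, THEN conjunct2,
      rule_format, OF assms(2,3)] .

lemma presentation_funcset:
  assumes "presentation Sig ar Hob Hmap eps"
  shows "eps X \<in> HS Sig ar X \<rightarrow> Hob X"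
  using assms unfolding presentation_def by simp

lemma presentation_natural:
  assumes "presentation Sig ar Hob Hmap eps" "f \<in> X \<rightarrow> Y" "p \<in> HS Sig ar X"
  shows "Hmap f (eps X p) = eps Y (HSmap f p)"
  using assms(1)[unfolded presentation_def, THEN conjunct2, rule_format, OF assms(2,3)] .

lemma alg_hom_eq:
  assumes "alg_hom Hob Hmap A a B b h" "u \<in> Hob A"
  shows "h (a u) = b (Hmap h u)"
  using assms unfolding alg_hom_def by simp

lemma map_sum_comp_funcset:
  assumes "e \<in> X \<rightarrow> A <+> B" "f \<in> A \<rightarrow> A'" "g \<in> B \<rightarrow> B'"
  shows "map_sum f g \<circ> e \<in> X \<rightarrow> A' <+> B'"
proof
  fix x assume "x \<in> X"
  with assms(1) have "e x \<in> A <+> B" by blast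
  with assms(2,3) show "(map_sum f g \<circ> e) x \<in> A' <+> B'" by auto
qed

lemma is_solution_cong:
  assumes "\<forall>z\<in>Z. f z = g z"
  shows "is_solution Hob Hmap Z A a f s \<longleftrightarrow> is_solution Hob Hmap Z A a g s"
  using assms unfolding is_solution_def by auto

lemma cia_solution_unique:
  assumes "cia Hob Hmap A a" "f \<in> Z \<rightarrow> Hob Z <+> A"
    and "is_solution Hob Hmap Z A a f s\<^sub>1" "is_solution Hob Hmap Z A a f s\<^sub>2"
  shows "\<forall>z\<in>Z. s\<^sub>1 z = s\<^sub>2 z"
proof -
  from assms(1,2) obtain s where
    "\<forall>s'. is_solution Hob Hmap Z A a f s' \<longrightarrow> (\<forall>z\<in>Z. s' z = s z)"
    unfolding cia_def by blast
  with assms(3,4) show ?thesis by metis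
qed

lemma is_solution_comp_alg_hom:
  assumes H: "set_functor Hob Hmap"
    and h: "alg_hom Hob Hmap A a B b h"
    and f: "f \<in> Z \<rightarrow> Hob Z <+> A"
    and s: "is_solution Hob Hmap Z A a f s"
  shows "is_solution Hob Hmap Z B b (map_sum id h \<circ> f) (h \<circ> s)"
  unfolding is_solution_def
proof (intro conjI ballI)
  have s_fun: "s \<in> Z \<rightarrow> A"
    and s_eq: "\<forall>z\<in>Z. s z = (case f z of Inl u \<Rightarrow> a (Hmap s u) | Inr x \<Rightarrow> x)"
    using s unfolding is_solution_def by auto
  have "h \<in> A \<rightarrow> B" using h unfolding alg_hom_def by simp
  with s_fun show "h \<circ> s \<in> Z \<rightarrow> B" by auto
  fix z assume z: "z \<in> Z"
  show "(h \<circ> s) z = (case (map_sum id h \<circ> f) z of Inl u \<Rightarrow> b (Hmap (h \<circ> s) u) | Inr x \<Rightarrow> x)"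
  proof (cases "f z")
    case (Inl u)
    with funcset_mem[OF f z] have u: "u \<in> Hob Z" by auto
    with set_functor_funcset[OF H s_fun] have "Hmap s u \<in> Hob A" by blast
    with h have "h (a (Hmap s u)) = b (Hmap h (Hmap s u))" by (rule alg_hom_eq)
    also have "Hmap h (Hmap s u) = Hmap (h \<circ> s) u"
      using set_functor_comp[OF H s_fun u] by simp
    finally show ?thesis using s_eq z Inl by simp
  next
    case (Inr x)
    then show ?thesis using s_eq z by simp
  qed
qed

lemma HSmap_in_HS:
  assumes "g \<in> X \<rightarrow> X'" "p \<in> HS Sig ar X"
  shows "HSmap g p \<in> HS Sig ar X'"
  using assms unfolding HS_def HSmap_def by auto

lemma is_solution_eval_tree_solution:
  assumes pres: "presentation Sig ar Hob Hmap eps"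
    and ev_fun: "ev \<in> TS Sig ar Y \<rightarrow> T"
    and ev_hom: "\<forall>p\<in>HS Sig ar (TS Sig ar Y). ev (tauS p) = tau (eps T (HSmap ev p))"
    and ev_leaf: "\<forall>y\<in>Y. ev (Leaf y) = eta y"
    and e: "e \<in> X \<rightarrow> HS Sig ar X <+> Y"
    and t_fun: "t \<in> X \<rightarrow> TS Sig ar Y"
    and t_eq: "\<forall>x\<in>X. t x = (case e x of Inl p \<Rightarrow> tauS (HSmap t p) | Inr y \<Rightarrow> Leaf y)"
  shows "is_solution Hob Hmap X T tau (map_sum (eps X) eta \<circ> e) (ev \<circ> t)"
  unfolding is_solution_def
proof (intro conjI ballI)
  show ev_t: "ev \<circ> t \<in> X \<rightarrow> T" using ev_fun t_fun by auto
  fix x assume x: "x \<in> X"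
  show "(ev \<circ> t) x = (case (map_sum (eps X) eta \<circ> e) x of
          Inl u \<Rightarrow> tau (Hmap (ev \<circ> t) u) | Inr y \<Rightarrow> y)"
  proof (cases "e x")
    case (Inl p)
    with funcset_mem[OF e x] have p: "p \<in> HS Sig ar X" by auto
    have "ev (t x) = ev (tauS (HSmap t p))" using t_eq x Inl by simp
    also have "\<dots> = tau (eps T (HSmap ev (HSmap t p)))"
      using ev_hom HSmap_in_HS[OF t_fun p] by blast
    also have "HSmap ev (HSmap t p) = HSmap (ev \<circ> t) p" unfolding HSmap_def by simp
    also have "eps T (HSmap (ev \<circ> t) p) = Hmap (ev \<circ> t) (eps X p)"
      using presentation_natural[OF pres ev_t p] by simp
    finally show ?thesis using Inl by simp
  next
    case (Inr y)
    with funcset_mem[OF e x] have "y \<in> Y" by auto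
    then show ?thesis using t_eq ev_leaf x Inr by simp
  qed
qed

theorem mainTheorem10:
  fixes Hob :: "'u set \<Rightarrow> 'h set" and Hmap :: "('u \<Rightarrow> 'u) \<Rightarrow> 'h \<Rightarrow> 'h"
    and Sig :: "'s set" and ar :: "'s \<Rightarrow> nat"
    and eps :: "'u set \<Rightarrow> 's \<times> 'u list \<Rightarrow> 'h"
    and Y :: "'y set"
    and C :: "'u set" and psi :: "'h \<Rightarrow> 'u" and etaC :: "'y \<Rightarrow> 'u"
    and T :: "'u set" and tau :: "'h \<Rightarrow> 'u" and eta :: "'y \<Rightarrow> 'u"
    and m :: "'u \<Rightarrow> 'u" and epshat :: "('s, 'y) stree \<Rightarrow> 'u"
    and X :: "'u set" and e :: "'u \<Rightarrow> ('s \<times> 'u list) + 'y"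
    and edd :: "'u \<Rightarrow> ('s, 'y) stree" and sol :: "'u \<Rightarrow> 'u"
  assumes H_std: "standard_functor Hob Hmap"
    and H_fin: "finitary Hob"
    and pres: "presentation Sig ar Hob Hmap eps"
    and C_free: "free_corecursive Hob Hmap Y C psi etaC"
    and C_cia: "cia Hob Hmap C psi"
    and T_free: "free_cia Hob Hmap Y T tau eta"
    and m_hom: "alg_hom Hob Hmap C psi T tau m"
    and m_eta: "\<forall>y\<in>Y. m (etaC y) = eta y"
    and epshat_fun: "epshat \<in> TS Sig ar Y \<rightarrow> T"
    and epshat_hom: "\<forall>p\<in>HS Sig ar (TS Sig ar Y). epshat (tauS p) = tau (eps T (HSmap epshat p))"
    and epshat_eta: "\<forall>y\<in>Y. epshat (Leaf y) = eta y"
    and e_fun: "e \<in> X \<rightarrow> HS Sig ar X <+> Y"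
    and edd_fun: "edd \<in> X \<rightarrow> TS Sig ar Y"
    and edd_eq: "\<forall>x\<in>X. edd x = (case e x of Inl p \<Rightarrow> tauS (HSmap edd p) | Inr y \<Rightarrow> Leaf y)"
    and sol: "is_solution Hob Hmap X C psi (map_sum (eps X) etaC \<circ> e) sol"
  shows "\<forall>x\<in>X. m (sol x) = epshat (edd x)"
proof -
  have H: "set_functor Hob Hmap" using H_std unfolding standard_functor_def by simp
  have T_cia: "cia Hob Hmap T tau" and eta_fun: "eta \<in> Y \<rightarrow> T"
    using T_free unfolding free_cia_def by auto
  have etaC_fun: "etaC \<in> Y \<rightarrow> C" using C_free unfolding free_corecursive_def by simp
  have eps_fun: "eps X \<in> HS Sig ar X \<rightarrow> Hob X" using pres by (rule presentation_funcset)
  define f where "f = map_sum (eps X) eta \<circ> e"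
  have f_fun: "f \<in> X \<rightarrow> Hob X <+> T"
    unfolding f_def using e_fun eps_fun eta_fun by (rule map_sum_comp_funcset)
  have m_sol_image:
    "is_solution Hob Hmap X T tau (map_sum id m \<circ> (map_sum (eps X) etaC \<circ> e)) (m \<circ> sol)"
    using H m_hom map_sum_comp_funcset[OF e_fun eps_fun etaC_fun] sol
    by (rule is_solution_comp_alg_hom)
  have equation_image: "\<forall>x\<in>X. (map_sum id m \<circ> (map_sum (eps X) etaC \<circ> e)) x = f x"
  proof
    fix x assume x: "x \<in> X"
    show "(map_sum id m \<circ> (map_sum (eps X) etaC \<circ> e)) x = f x"
      using funcset_mem[OF e_fun x] m_eta unfolding f_def by (cases "e x") auto
  qed
  have m_sol: "is_solution Hob Hmap X T tau f (m \<circ> sol)"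
    using is_solution_cong[OF equation_image] m_sol_image by blast
  have epshat_edd: "is_solution Hob Hmap X T tau f (epshat \<circ> edd)"
    unfolding f_def using pres epshat_fun epshat_hom epshat_eta e_fun edd_fun edd_eq
    by (rule is_solution_eval_tree_solution)
  show ?thesis using cia_solution_unique[OF T_cia f_fun m_sol epshat_edd] by simp
qed

end
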